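(* Let $X$ be a real Banach space. Then $\operatorname{sm}(B_X)\in\{0,1\}$.
   Context: $B_X$ is the closed unit ball of $X$. A bounded sequence $(y_k)$ generates an $\ell_1$-spreading model with $\delta>0$ if $\|\sum_{i\in F}\alpha_i y_i\|\ge\delta\sum_{i\in F}|\alpha_i|$ for every finite $F\subset\mathbb N$ with $\#F\le\min F$ and all real scalars $(\alpha_i)_{i\in F}$. For a bounded set $A$, $\operatorname{sm}(A)=\sup\{\delta>0: \exists (x_k)\subset A,\ x_k\to x\text{ weakly for some }x\in X,\ (x_k-x)\text{ generates an }\ell_1\text{-spreading model with }\delta\}$, with the convention $\sup\emptyset=0$. *)

theory Defs
  imports "HOL-Analysis.Analysis"
begin

definition weakly_tendsto :: "(nat \<Rightarrow> 'a::real_normed_vector) \<Rightarrow> 'a \<Rightarrow> bool" where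
  "weakly_tendsto x l \<longleftrightarrow>
     (\<forall>f :: 'a \<Rightarrow> real. bounded_linear f \<longrightarrow> (\<lambda>k. f (x k)) \<longlonglongrightarrow> f l)"

text \<open>The paper indexes sequences by N = {1,2,...}; here y k stands for y_(k+1),
  so the condition #F <= min F becomes card F <= Min F + 1.\<close>
definition l1_spreading_model :: "(nat \<Rightarrow> 'a::real_normed_vector) \<Rightarrow> real \<Rightarrow> bool" where
  "l1_spreading_model y \<delta> \<longleftrightarrow> \<delta> > 0 \<and> bounded (range y) \<and>
     (\<forall>F \<alpha>. finite F \<and> F \<noteq> {} \<and> card F \<le> Min F + 1 \<longrightarrow>
        \<delta> * (\<Sum>i\<in>F. \<bar>\<alpha> i\<bar>) \<le> norm (\<Sum>i\<in>F. \<alpha> i *\<^sub>R y i))"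

definition sm_set :: "'a::real_normed_vector set \<Rightarrow> real set" where
  "sm_set A = {\<delta>. \<delta> > 0 \<and> (\<exists>x l. range x \<subseteq> A \<and> weakly_tendsto x l \<and>
                  l1_spreading_model (\<lambda>k. x k - l) \<delta>)}"

definition sm :: "'a::real_normed_vector set \<Rightarrow> real" where
  "sm A = (if sm_set A = {} then 0 else Sup (sm_set A))"

end

theory Submission
  imports Defs
begin

text \<open>
  Let a weakly null sequence \<open>y\<close> generate an \<open>\<ell>\<^sub>1\<close> spreading model. For each
  length \<open>T\<close> consider the best constant \<open>M(T)\<close> in the lower \<open>\<ell>\<^sub>1\<close> estimate for
  combinations of at most \<open>T\<close> vectors \<open>y\<^sub>i\<close> taken from a late enough tail, and
  let \<open>\<mu> = inf\<^sub>T M(T) > 0\<close>. Given \<open>\<theta> < 1\<close>, every \<open>T\<close> admits a tail with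
  constant \<open>\<mu>\<theta>\<close>, while for some \<open>S\<close> every tail contains a normalised block of at most
  \<open>S\<close> vectors with norm below \<open>\<mu>/\<theta>\<close>. Successive such blocks, chosen beyond the
  tails belonging to \<open>T = (j+1)S\<close>, and rescaled by \<open>\<theta>/\<mu>\<close> lie in the unit ball, are
  weakly null and generate an \<open>\<ell>\<^sub>1\<close> spreading model with constant \<open>\<theta>\<^sup>2\<close>. Hence
  \<open>sm(B\<^sub>X)\<close> is \<open>0\<close> or at least every \<open>\<theta>\<^sup>2 < 1\<close>, and testing the spreading model
  on \<open>y\<^sub>1 - y\<^sub>2\<close> bounds it by \<open>1\<close>.
\<close>

definition l1_lower_estimate :: "(nat \<Rightarrow> 'a::real_normed_vector) \<Rightarrow> nat \<Rightarrow> nat \<Rightarrow> real \<Rightarrow> bool" where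
  "l1_lower_estimate y n T r \<longleftrightarrow>
     (\<forall>F c. finite F \<and> F \<subseteq> {n..} \<and> card F \<le> T \<longrightarrow>
        r * (\<Sum>i\<in>F. \<bar>c i\<bar>) \<le> norm (\<Sum>i\<in>F. c i *\<^sub>R y i))"

lemma l1_lower_estimateD:
  assumes "l1_lower_estimate y n T r" "finite F" "F \<subseteq> {n..}" "card F \<le> T"
  shows "r * (\<Sum>i\<in>F. \<bar>c i\<bar>) \<le> norm (\<Sum>i\<in>F. c i *\<^sub>R y i)"
  using assms unfolding l1_lower_estimate_def by blast

lemma l1_lower_estimate_mono:
  assumes "l1_lower_estimate y n T r" "n \<le> n'" "T' \<le> T" "r' \<le> r"
  shows "l1_lower_estimate y n' T' r'"
  unfolding l1_lower_estimate_def
proof (intro allI impI)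
  fix F c assume F: "finite F \<and> F \<subseteq> {n'..} \<and> card F \<le> T'"
  have "r' * (\<Sum>i\<in>F. \<bar>c i\<bar>) \<le> r * (\<Sum>i\<in>F. \<bar>c i\<bar>)"
    using assms(4) by (simp add: mult_right_mono sum_nonneg)
  also have "\<dots> \<le> norm (\<Sum>i\<in>F. c i *\<^sub>R y i)"
    using F assms(2,3) by (intro l1_lower_estimateD[OF assms(1)]) auto
  finally show "r' * (\<Sum>i\<in>F. \<bar>c i\<bar>) \<le> norm (\<Sum>i\<in>F. c i *\<^sub>R y i)" .
qed

lemma l1_lower_estimate_le_norm:
  assumes "l1_lower_estimate y n (Suc T) r"
  shows "r \<le> norm (y n)"
  using l1_lower_estimateD[OF assms, of "{n}" "\<lambda>_. 1"] by simp

lemma l1_spreading_model_imp_l1_lower_estimate: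
  assumes "l1_spreading_model y \<delta>"
  shows "l1_lower_estimate y n (Suc n) \<delta>"
  unfolding l1_lower_estimate_def
proof (intro allI impI)
  fix F c assume F: "finite F \<and> F \<subseteq> {n..} \<and> card F \<le> Suc n"
  show "\<delta> * (\<Sum>i\<in>F. \<bar>c i\<bar>) \<le> norm (\<Sum>i\<in>F. c i *\<^sub>R y i)"
  proof (cases "F = {}")
    case False
    have "n \<le> Min F" using F False by auto
    then have "card F \<le> Min F + 1" using F by linarith
    then show ?thesis using assms F False unfolding l1_spreading_model_def by blast
  qed simp
qed

lemma not_l1_lower_estimate_imp_normalized:
  assumes "\<not> l1_lower_estimate y n T r"
  shows "\<exists>F c. finite F \<and> F \<subseteq> {n..} \<and> card F \<le> T \<and> (\<Sum>i\<in>F. \<bar>c i\<bar>) = 1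
           \<and> norm (\<Sum>i\<in>F. c i *\<^sub>R y i) < r"
proof -
  obtain F c where F: "finite F" "F \<subseteq> {n..}" "card F \<le> T"
    and lt: "norm (\<Sum>i\<in>F. c i *\<^sub>R y i) < r * (\<Sum>i\<in>F. \<bar>c i\<bar>)"
    using assms unfolding l1_lower_estimate_def by (auto simp: not_le)
  define s where "s = (\<Sum>i\<in>F. \<bar>c i\<bar>)"
  have "s \<noteq> 0" using lt unfolding s_def[symmetric] by auto
  then have s: "s > 0" unfolding s_def by (simp add: sum_nonneg order_le_neq_trans)
  have "(\<Sum>i\<in>F. \<bar>c i / s\<bar>) = 1"
    using s by (simp add: s_def[symmetric] sum_divide_distrib[symmetric])
  moreover have "(\<Sum>i\<in>F. (c i / s) *\<^sub>R y i) = (1 / s) *\<^sub>R (\<Sum>i\<in>F. c i *\<^sub>R y i)"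
    by (simp add: scaleR_sum_right)
  then have "norm (\<Sum>i\<in>F. (c i / s) *\<^sub>R y i) = norm (\<Sum>i\<in>F. c i *\<^sub>R y i) / s"
    using s by simp
  moreover have "norm (\<Sum>i\<in>F. c i *\<^sub>R y i) / s < r"
    using lt s unfolding s_def[symmetric] by (simp add: divide_less_eq)
  ultimately show ?thesis using F by metis
qed

lemma norm_sum_scaleR_le:
  assumes "\<And>i. i \<in> F \<Longrightarrow> norm (y i) \<le> B"
  shows "norm (\<Sum>i\<in>F. c i *\<^sub>R y i) \<le> (\<Sum>i\<in>F. \<bar>c i\<bar>) * B"
proof -
  have "norm (\<Sum>i\<in>F. c i *\<^sub>R y i) \<le> (\<Sum>i\<in>F. \<bar>c i\<bar> * B)"
    using assms by (intro order_trans[OF norm_sum] sum_mono) (auto intro: mult_left_mono)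
  then show ?thesis by (simp add: sum_distrib_right)
qed

lemma sum_blocks_as_combination:
  fixes y :: "nat \<Rightarrow> 'a::real_vector"
  assumes "finite G" "\<forall>j\<in>G. finite (F j)" "disjoint_family_on F G"
  shows "\<exists>d. (\<Sum>j\<in>G. b j *\<^sub>R (\<Sum>i\<in>F j. c j i *\<^sub>R y i)) = (\<Sum>i\<in>(\<Union>j\<in>G. F j). d i *\<^sub>R y i)
           \<and> (\<Sum>i\<in>(\<Union>j\<in>G. F j). \<bar>d i\<bar>) = (\<Sum>j\<in>G. \<bar>b j\<bar> * (\<Sum>i\<in>F j. \<bar>c j i\<bar>))"
proof -
  define d where "d i = (\<Sum>j\<in>G. if i \<in> F j then b j * c j i else 0)" for i
  have d: "d i = b k * c k i" if "k \<in> G" "i \<in> F k" for k i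
  proof -
    have "d i = (\<Sum>j\<in>G. if j = k then b k * c k i else 0)"
      unfolding d_def using assms(3) that by (intro sum.cong) (auto simp: disjoint_family_on_def)
    then show ?thesis using assms(1) that(1) by simp
  qed
  have "(\<Sum>i\<in>(\<Union>j\<in>G. F j). d i *\<^sub>R y i) = (\<Sum>j\<in>G. b j *\<^sub>R (\<Sum>i\<in>F j. c j i *\<^sub>R y i))"
    by (simp add: sum.UNION_disjoint_family[OF assms] scaleR_sum_right d cong: sum.cong)
  moreover have "(\<Sum>i\<in>(\<Union>j\<in>G. F j). \<bar>d i\<bar>) = (\<Sum>j\<in>G. \<bar>b j\<bar> * (\<Sum>i\<in>F j. \<bar>c j i\<bar>))"
    by (simp add: sum.UNION_disjoint_family[OF assms] sum_distrib_left d abs_mult cong: sum.cong)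
  ultimately show ?thesis by metis
qed

lemma successive_blocks:
  fixes q :: "nat \<Rightarrow> nat"
  assumes "\<forall>n. \<exists>F c. finite F \<and> F \<subseteq> {n..} \<and> B F c"
  shows "\<exists>p F c. strict_mono p \<and> (\<forall>j. q j \<le> p j \<and> F j \<subseteq> {p j..<p (Suc j)} \<and> B (F j) (c j))"
proof -
  obtain \<Phi> \<gamma> where \<Phi>: "\<And>n. finite (\<Phi> n) \<and> \<Phi> n \<subseteq> {n..} \<and> B (\<Phi> n) (\<gamma> n)"
    using assms by metis
  define p where "p = rec_nat (q 0) (\<lambda>j pj. max (q (Suc j)) (Suc (Max (insert pj (\<Phi> pj)))))"
  have p_Suc: "p (Suc j) = max (q (Suc j)) (Suc (Max (insert (p j) (\<Phi> (p j)))))" for j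
    unfolding p_def by simp
  have "q j \<le> p j" for j
    by (cases j) (simp_all add: p_def)
  moreover have "\<Phi> (p j) \<subseteq> {p j..<p (Suc j)}" for j
  proof
    fix i assume i: "i \<in> \<Phi> (p j)"
    then have "i < Suc (Max (insert (p j) (\<Phi> (p j))))" using \<Phi> by (simp add: le_imp_less_Suc)
    then show "i \<in> {p j..<p (Suc j)}" using i \<Phi> unfolding p_Suc by (auto simp: less_max_iff_disj)
  qed
  moreover have "strict_mono p"
    unfolding strict_mono_Suc_iff
  proof
    fix j
    have "p j \<le> Max (insert (p j) (\<Phi> (p j)))" using \<Phi> by simp
    also have "\<dots> < p (Suc j)" unfolding p_Suc by simp
    finally show "p j < p (Suc j)" .
  qed
  ultimately show ?thesis
    using \<Phi> by (intro exI[of _ p] exI[of _ "\<lambda>j. \<Phi> (p j)"] exI[of _ "\<lambda>j. \<gamma> (p j)"]) blast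
qed

text \<open>An admissible set \<open>G\<close> of blocks contains at most \<open>(Min G + 1) * S\<close> vectors, all
  beyond \<open>p (Min G)\<close>; this is why the \<open>j\<close>-th block must start beyond a tail with a lower
  estimate for combinations of length \<open>(j + 1) * S\<close>.\<close>

lemma l1_lower_estimate_blocks:
  fixes y :: "nat \<Rightarrow> 'a::real_normed_vector"
  assumes p: "strict_mono p" and F: "\<And>j. F j \<subseteq> {p j..<p (Suc j)}"
    and card_F: "\<And>j. card (F j) \<le> S" and c: "\<And>j. (\<Sum>i\<in>F j. \<bar>c j i\<bar>) = 1"
    and est: "\<And>j. l1_lower_estimate y (p j) (Suc j * S) \<rho>"
    and G: "finite G" "G \<noteq> {}" "card G \<le> Min G + 1"
  shows "\<rho> * (\<Sum>j\<in>G. \<bar>b j\<bar>) \<le> norm (\<Sum>j\<in>G. b j *\<^sub>R (\<Sum>i\<in>F j. c j i *\<^sub>R y i))"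
proof -
  define U where "U = (\<Union>j\<in>G. F j)"
  define g where "g = Min G"
  have fin: "\<forall>j\<in>G. finite (F j)" using F by (meson finite_atLeastLessThan finite_subset)
  have "disjoint_family_on F G"
    unfolding disjoint_family_on_def
  proof (intro ballI impI)
    have "F j \<inter> F k = {}" if "j < k" for j k
    proof -
      have "p (Suc j) \<le> p k" using that strict_mono_less_eq[OF p] by simp
      then have "F j \<subseteq> {..<p k}" "F k \<subseteq> {p k..}" using F[of j] F[of k] by auto
      then show ?thesis by (force simp: subset_eq)
    qed
    then show "F j \<inter> F k = {}" if "j \<noteq> k" for j k
      using that by (metis Int_commute nat_neq_iff)
  qed
  then obtain d where d: "(\<Sum>j\<in>G. b j *\<^sub>R (\<Sum>i\<in>F j. c j i *\<^sub>R y i)) = (\<Sum>i\<in>U. d i *\<^sub>R y i)"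
      "(\<Sum>i\<in>U. \<bar>d i\<bar>) = (\<Sum>j\<in>G. \<bar>b j\<bar>)"
    using sum_blocks_as_combination[OF G(1) fin, of b c y] c unfolding U_def by auto
  have "U \<subseteq> {p g..}"
  proof
    fix i assume "i \<in> U"
    then obtain j where "j \<in> G" "i \<in> F j" unfolding U_def by blast
    moreover from \<open>j \<in> G\<close> have "p g \<le> p j"
      unfolding g_def using G(1) strict_mono_less_eq[OF p] by simp
    ultimately show "i \<in> {p g..}" using F[of j] by auto
  qed
  moreover have "card U \<le> Suc g * S"
  proof -
    have "card U \<le> (\<Sum>j\<in>G. card (F j))" unfolding U_def by (rule card_UN_le[OF G(1)])
    also have "\<dots> \<le> card G * S" using sum_bounded_above[of G "\<lambda>j. card (F j)" S] card_F by simp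
    also have "\<dots> \<le> Suc g * S" using G(3) unfolding g_def by (intro mult_le_mono1) simp
    finally show ?thesis .
  qed
  moreover have "finite U" unfolding U_def using G(1) fin by blast
  ultimately show ?thesis using l1_lower_estimateD[OF est[of g], of U d] d by simp
qed

lemma weakly_tendsto_blocks:
  assumes y: "weakly_tendsto y 0" and p: "strict_mono p"
    and F: "\<And>j. F j \<subseteq> {p j..}" and c: "\<And>j. (\<Sum>i\<in>F j. \<bar>c j i\<bar>) \<le> 1"
  shows "weakly_tendsto (\<lambda>j. \<Sum>i\<in>F j. c j i *\<^sub>R y i) 0"
  unfolding weakly_tendsto_def
proof (intro allI impI)
  fix f :: "'a \<Rightarrow> real" assume f: "bounded_linear f"
  interpret f: bounded_linear f by fact
  have fy: "(\<lambda>i. f (y i)) \<longlonglongrightarrow> 0" using y f f.zero unfolding weakly_tendsto_def by metis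
  show "(\<lambda>j. f (\<Sum>i\<in>F j. c j i *\<^sub>R y i)) \<longlonglongrightarrow> f 0"
  proof (rule LIMSEQ_I)
    fix e :: real assume e: "0 < e"
    obtain N where N: "\<And>i. N \<le> i \<Longrightarrow> norm (f (y i)) < e / 2"
      using LIMSEQ_D[OF fy, of "e / 2"] e by auto
    have "norm (f (\<Sum>i\<in>F j. c j i *\<^sub>R y i) - f 0) < e" if "N \<le> j" for j
    proof -
      have "N \<le> i" if "i \<in> F j" for i
        using \<open>N \<le> j\<close> seq_suble[OF p, of j] F[of j] that by auto
      then have "norm (\<Sum>i\<in>F j. c j i *\<^sub>R f (y i)) \<le> (\<Sum>i\<in>F j. \<bar>c j i\<bar>) * (e / 2)"
        using N by (intro norm_sum_scaleR_le) (simp add: less_imp_le)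
      also have "\<dots> \<le> e / 2" using c[of j] e by (simp add: mult_left_le_one_le)
      finally show ?thesis using e by (simp add: f.sum f.scaleR)
    qed
    then show "\<exists>N. \<forall>j\<ge>N. norm (f (\<Sum>i\<in>F j. c j i *\<^sub>R y i) - f 0) < e" by blast
  qed
qed

lemma weakly_tendsto_scaleR:
  assumes "weakly_tendsto x l"
  shows "weakly_tendsto (\<lambda>k. a *\<^sub>R x k) (a *\<^sub>R l)"
  unfolding weakly_tendsto_def
proof (intro allI impI)
  fix f :: "'a \<Rightarrow> real" assume f: "bounded_linear f"
  interpret f: bounded_linear f by fact
  show "(\<lambda>k. f (a *\<^sub>R x k)) \<longlonglongrightarrow> f (a *\<^sub>R l)"
    using assms f unfolding weakly_tendsto_def by (simp add: f.scaleR tendsto_mult_left)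
qed

lemma weakly_tendsto_diff_limit:
  assumes "weakly_tendsto x l"
  shows "weakly_tendsto (\<lambda>k. x k - l) 0"
  unfolding weakly_tendsto_def
proof (intro allI impI)
  fix f :: "'a \<Rightarrow> real" assume f: "bounded_linear f"
  interpret f: bounded_linear f by fact
  have "(\<lambda>k. f (x k)) \<longlonglongrightarrow> f l" using assms f unfolding weakly_tendsto_def by blast
  then have "(\<lambda>k. f (x k) - f l) \<longlonglongrightarrow> 0" by (rule LIM_zero)
  then show "(\<lambda>k. f (x k - l)) \<longlonglongrightarrow> f 0" by (simp add: f.diff)
qed

lemma l1_spreading_model_scaleR:
  assumes "l1_spreading_model y \<delta>" "0 < a"
  shows "l1_spreading_model (\<lambda>k. a *\<^sub>R y k) (a * \<delta>)"
  unfolding l1_spreading_model_def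
proof (intro conjI allI impI)
  show "0 < a * \<delta>" using assms unfolding l1_spreading_model_def by simp
  have "bounded ((\<lambda>v. a *\<^sub>R v) ` range y)"
    using assms unfolding l1_spreading_model_def by (intro bounded_scaling) simp
  then show "bounded (range (\<lambda>k. a *\<^sub>R y k))" by (simp add: image_image)
  fix F \<alpha> assume "finite F \<and> F \<noteq> {} \<and> card F \<le> Min F + 1"
  then have "a * (\<delta> * (\<Sum>i\<in>F. \<bar>\<alpha> i\<bar>)) \<le> a * norm (\<Sum>i\<in>F. \<alpha> i *\<^sub>R y i)"
    using assms unfolding l1_spreading_model_def by (intro mult_left_mono) auto
  also have "\<dots> = norm (a *\<^sub>R (\<Sum>i\<in>F. \<alpha> i *\<^sub>R y i))"
    using assms(2) by simp
  also have "a *\<^sub>R (\<Sum>i\<in>F. \<alpha> i *\<^sub>R y i) = (\<Sum>i\<in>F. \<alpha> i *\<^sub>R a *\<^sub>R y i)"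
    by (simp add: scaleR_sum_right mult.commute)
  finally show "a * \<delta> * (\<Sum>i\<in>F. \<bar>\<alpha> i\<bar>) \<le> norm (\<Sum>i\<in>F. \<alpha> i *\<^sub>R a *\<^sub>R y i)"
    by (simp add: mult.assoc)
qed

lemma common_level_with_gap:
  fixes A :: "nat \<Rightarrow> real set"
  assumes \<delta>: "0 < \<delta>" "\<And>T. \<delta> \<in> A T"
    and bdd: "\<And>T. bdd_above (A T)"
    and down: "\<And>T r r'. r \<in> A T \<Longrightarrow> r' \<le> r \<Longrightarrow> r' \<in> A T"
    and \<theta>: "0 < \<theta>" "\<theta> < 1"
  shows "\<exists>\<rho>>0. (\<forall>T. \<rho> \<in> A T) \<and> (\<exists>S. \<rho> / \<theta>\<^sup>2 \<notin> A S)"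
proof -
  define \<mu> where "\<mu> = (INF T. Sup (A T))"
  have sup_ge: "\<delta> \<le> Sup (A T)" for T using \<delta>(2) bdd by (rule cSup_upper)
  then have bdd_sup: "bdd_below (range (\<lambda>T. Sup (A T)))" by (rule bdd_belowI2)
  have "\<delta> \<le> \<mu>" unfolding \<mu>_def using sup_ge by (intro cINF_greatest) auto
  with \<delta>(1) have \<mu>: "0 < \<mu>" by linarith
  have "\<mu> * \<theta> \<in> A T" for T
  proof -
    have "\<mu> \<le> Sup (A T)" unfolding \<mu>_def using bdd_sup by (rule cINF_lower) simp
    moreover have "\<mu> * \<theta> < \<mu>" using \<mu> \<theta> by simp
    ultimately have "\<mu> * \<theta> < Sup (A T)" by linarith
    moreover have "A T \<noteq> {}" using \<delta>(2) by blast
    ultimately obtain r where "r \<in> A T" "\<mu> * \<theta> < r" using less_cSupD by blast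
    then show ?thesis using down[of r T "\<mu> * \<theta>"] by simp
  qed
  moreover obtain S where "Sup (A S) < \<mu> / \<theta>"
  proof -
    have "\<mu> < \<mu> / \<theta>" using \<mu> \<theta> by (simp add: less_divide_eq)
    then show ?thesis using that cINF_less_iff[OF UNIV_not_empty bdd_sup] unfolding \<mu>_def by blast
  qed
  then have "\<mu> / \<theta> \<notin> A S" using bdd[of S] cSup_upper[of _ "A S"] by fastforce
  moreover have "\<mu> * \<theta> / \<theta>\<^sup>2 = \<mu> / \<theta>" using \<theta> by (simp add: power2_eq_square)
  ultimately show ?thesis using \<mu> \<theta> by (intro exI[of _ "\<mu> * \<theta>"]) auto
qed

lemma weakly_null_blocks_below_gap:
  fixes y :: "nat \<Rightarrow> 'a::real_normed_vector"
  assumes y: "weakly_tendsto y 0" and \<rho>: "0 < \<rho>"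
    and lower: "\<And>T. \<exists>n. l1_lower_estimate y n T \<rho>"
    and upper: "\<And>n. \<not> l1_lower_estimate y n S R"
  shows "\<exists>u :: nat \<Rightarrow> 'a. (\<forall>k. norm (u k) < R) \<and> weakly_tendsto u 0 \<and> l1_spreading_model u \<rho>"
proof -
  obtain n where n: "\<forall>T. l1_lower_estimate y (n T) T \<rho>"
    using choice[of "\<lambda>T n. l1_lower_estimate y n T \<rho>"] lower by blast
  have "\<forall>m. \<exists>F c. finite F \<and> F \<subseteq> {m..} \<and> (card F \<le> S \<and> (\<Sum>i\<in>F. \<bar>c i\<bar>) = 1
          \<and> norm (\<Sum>i\<in>F. c i *\<^sub>R y i) < R)"
    using not_l1_lower_estimate_imp_normalized[OF upper] by blast
  from successive_blocks[OF this, of "\<lambda>j. n (Suc j * S)"]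
  obtain p F c where p: "strict_mono p"
    and blocks: "\<forall>j. n (Suc j * S) \<le> p j \<and> F j \<subseteq> {p j..<p (Suc j)} \<and> card (F j) \<le> S
          \<and> (\<Sum>i\<in>F j. \<bar>c j i\<bar>) = 1 \<and> norm (\<Sum>i\<in>F j. c j i *\<^sub>R y i) < R"
    by blast
  define u where "u j = (\<Sum>i\<in>F j. c j i *\<^sub>R y i)" for j
  have u_less: "\<forall>k. norm (u k) < R" unfolding u_def using blocks by blast
  have est: "l1_lower_estimate y (p j) (Suc j * S) \<rho>" for j
    by (rule l1_lower_estimate_mono[OF spec[OF n]]) (use blocks in auto)
  have "l1_spreading_model u \<rho>"
    unfolding l1_spreading_model_def
  proof (intro conjI allI impI)
    show "bounded (range u)"
      unfolding bounded_iff using u_less by (intro exI[of _ R]) (auto intro: less_imp_le)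
    fix G b assume "finite G \<and> G \<noteq> {} \<and> card G \<le> Min G + 1"
    then show "\<rho> * (\<Sum>j\<in>G. \<bar>b j\<bar>) \<le> norm (\<Sum>j\<in>G. b j *\<^sub>R u j)"
      unfolding u_def by (intro l1_lower_estimate_blocks[OF p _ _ _ est]) (use blocks in auto)
  qed (rule \<rho>)
  moreover have "weakly_tendsto u 0"
  proof -
    have "F j \<subseteq> {p j..}" for j using spec[OF blocks, of j] by auto
    then show ?thesis unfolding u_def by (rule weakly_tendsto_blocks[OF y p]) (use blocks in auto)
  qed
  ultimately show ?thesis using u_less by (intro exI[of _ u]) simp
qed

lemma weakly_null_l1_spreading_model_in_unit_ball:
  fixes y :: "nat \<Rightarrow> 'a::real_normed_vector"
  assumes y: "weakly_tendsto y 0" "l1_spreading_model y \<delta>" and \<theta>: "0 < \<theta>" "\<theta> < 1"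
  shows "\<exists>w :: nat \<Rightarrow> 'a. range w \<subseteq> cball 0 1 \<and> weakly_tendsto w 0 \<and> l1_spreading_model w (\<theta>\<^sup>2)"
proof -
  \<comment> \<open>\<open>Suc T\<close>: for length \<open>0\<close> the estimate is vacuous and the set of constants unbounded.\<close>
  define A where "A T = {r. \<exists>n. l1_lower_estimate y n (Suc T) r}" for T
  obtain B where B: "\<And>k. norm (y k) \<le> B"
    using y(2) unfolding l1_spreading_model_def bounded_iff by auto
  have "\<exists>\<rho>>0. (\<forall>T. \<rho> \<in> A T) \<and> (\<exists>S. \<rho> / \<theta>\<^sup>2 \<notin> A S)"
  proof (rule common_level_with_gap[OF _ _ _ _ \<theta>])
    show "0 < \<delta>" using y(2) unfolding l1_spreading_model_def by simp
    show "\<delta> \<in> A T" for T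
      unfolding A_def using l1_spreading_model_imp_l1_lower_estimate[OF y(2), of T] by blast
    show "bdd_above (A T)" for T
      unfolding A_def using l1_lower_estimate_le_norm B order_trans by (intro bdd_aboveI[of _ B]) blast
    show "r' \<in> A T" if "r \<in> A T" "r' \<le> r" for T r r'
      using that l1_lower_estimate_mono[OF _ order_refl order_refl] unfolding A_def by blast
  qed
  then obtain \<rho> S where \<rho>: "0 < \<rho>" and lower: "\<And>T. \<exists>n. l1_lower_estimate y n (Suc T) \<rho>"
    and upper: "\<And>n. \<not> l1_lower_estimate y n (Suc S) (\<rho> / \<theta>\<^sup>2)"
    unfolding A_def by auto
  have "\<exists>n. l1_lower_estimate y n T \<rho>" for T
    using lower[of T] l1_lower_estimate_mono[OF _ order_refl le_SucI[OF order_refl] order_refl] by blast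
  then obtain u :: "nat \<Rightarrow> 'a" where u: "\<forall>k. norm (u k) < \<rho> / \<theta>\<^sup>2" "weakly_tendsto u 0" "l1_spreading_model u \<rho>"
    using weakly_null_blocks_below_gap[OF y(1) \<rho> _ upper] by blast
  define a where "a = \<theta>\<^sup>2 / \<rho>"
  have a: "0 < a" "a * (\<rho> / \<theta>\<^sup>2) = 1" "a * \<rho> = \<theta>\<^sup>2"
    unfolding a_def using \<rho> \<theta> by auto
  have "norm (a *\<^sub>R u k) \<le> 1" for k
    using mult_strict_left_mono[OF spec[OF u(1), of k] a(1)] a by simp
  moreover have "weakly_tendsto (\<lambda>k. a *\<^sub>R u k) 0"
    using weakly_tendsto_scaleR[OF u(2), of a] by simp
  moreover have "l1_spreading_model (\<lambda>k. a *\<^sub>R u k) (\<theta>\<^sup>2)"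
    using l1_spreading_model_scaleR[OF u(3) a(1)] a(3) by simp
  ultimately show ?thesis by (intro exI[of _ "\<lambda>k. a *\<^sub>R u k"]) auto
qed

lemma l1_spreading_model_le_bound:
  assumes "l1_spreading_model (\<lambda>k. x k - l) \<delta>" "\<And>k. norm (x k) \<le> R"
  shows "\<delta> \<le> R"
proof -
  define \<alpha> :: "nat \<Rightarrow> real" where "\<alpha> i = (if i = 1 then 1 else -1)" for i
  have "\<delta> * (\<Sum>i\<in>{1,2}. \<bar>\<alpha> i\<bar>) \<le> norm (\<Sum>i\<in>{1::nat,2}. \<alpha> i *\<^sub>R (x i - l))"
    using assms(1) unfolding l1_spreading_model_def
    by (elim conjE allE[of _ "{1, 2}"] allE[of _ \<alpha>]) simp
  then have "2 * \<delta> \<le> norm (x 1 - x 2)" by (simp add: \<alpha>_def algebra_simps)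
  also have "\<dots> \<le> norm (x 1) + norm (x 2)" by (rule norm_triangle_ineq4)
  also have "\<dots> \<le> 2 * R" using assms(2)[of 1] assms(2)[of 2] by simp
  finally show ?thesis by simp
qed

lemma sm_set_cball_le_radius:
  assumes "\<delta> \<in> sm_set (cball (0::'a::real_normed_vector) R)"
  shows "\<delta> \<le> R"
proof -
  from assms obtain x :: "nat \<Rightarrow> 'a" and l where "range x \<subseteq> cball 0 R" "l1_spreading_model (\<lambda>k. x k - l) \<delta>"
    unfolding sm_set_def by blast
  then show ?thesis using l1_spreading_model_le_bound[of x l \<delta> R] by (auto simp: image_subset_iff)
qed

lemma sm_set_unit_ball_contains_unit_interval:
  assumes "sm_set (cball (0::'a::real_normed_vector) 1) \<noteq> {}" "0 < t" "t < 1"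
  shows "t \<in> sm_set (cball (0::'a) 1)"
proof -
  from assms(1) obtain \<delta> and x :: "nat \<Rightarrow> 'a" and l where
    "weakly_tendsto x l" "l1_spreading_model (\<lambda>k. x k - l) \<delta>"
    unfolding sm_set_def by blast
  moreover have "0 < sqrt t" "sqrt t < 1" using assms(2,3) by auto
  ultimately obtain w :: "nat \<Rightarrow> 'a" where
    "range w \<subseteq> cball 0 1" "weakly_tendsto w 0" "l1_spreading_model w ((sqrt t)\<^sup>2)"
    using weakly_null_l1_spreading_model_in_unit_ball[OF weakly_tendsto_diff_limit] by blast
  then show ?thesis
    unfolding sm_set_def using assms(2) by (intro CollectI conjI exI[of _ w] exI[of _ 0]) auto
qed

theorem lemma5p3:
  shows "sm (cball (0::'a::banach) 1) \<in> {0, 1}"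
proof (cases "sm_set (cball (0::'a) 1) = {}")
  case True
  then show ?thesis unfolding sm_def by simp
next
  case False
  have "Sup (sm_set (cball (0::'a) 1)) = 1"
  proof (rule cSup_eq)
    show "\<delta> \<le> 1" if "\<delta> \<in> sm_set (cball (0::'a) 1)" for \<delta>
      using sm_set_cball_le_radius[OF that] .
    show "1 \<le> b" if "\<And>\<delta>. \<delta> \<in> sm_set (cball (0::'a) 1) \<Longrightarrow> \<delta> \<le> b" for b
      using dense_le_bounded[of 0 1 b] that sm_set_unit_ball_contains_unit_interval[OF False] by simp
  qed
  then show ?thesis unfolding sm_def using False by simp
qed

end
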